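(* Let $\alpha\ge1$ and $2\le m\le k<n$. Suppose a single-pass streaming algorithm $\mathcal{A}$ with memory $m$ satisfies condition (SR). Then for every $i\in[k]$ and all sufficiently large $T$, $$\mathbb{E}_{\nu_i}[L_1]\le\frac18 f(k,m)\,T^{\frac{1}{\alpha+1}}.$$
   Context: Streaming stochastic multi-armed bandit: $n$ arms arrive one by one in a stream; arm $i$ has Bernoulli rewards with mean $\mu_i$. At most $m$ arms can be stored in memory; in each of $T$ rounds the player may discard stored arms and read next arms from the stream, then pulls exactly one stored arm $A_t$; discarded or passed-over arms cannot be pulled again. Regret $\mathbb{E}_\nu[R(T)]=\mathbb{E}_\nu[\sum_{t=1}^T(\mu_*-\mu_{A_t})]$ with $\mu_*$ the largest mean of $\nu$. Hard instances: $\varepsilon=\frac14\left(\frac{k}{T}\right)^{\frac{1}{2+2\alpha}}$, arms arriving in order $1,\dots,n$. $\nu_1$: arm 1 mean $\frac12+n\varepsilon$, arms $2,\dots,k$ mean $\frac12+(n-1)\varepsilon$, arms $k+1,\dots,n$ mean $\frac12$. For $2\le i\le k$, $\nu_i$ equals $\nu_1$ except arm $i$ has mean $\frac12+(n+1)\varepsilon$. $\mathcal{I}=\{\nu_1,\dots,\nu_k\}$. $\nu_i'$ equals $\nu_i$ except arms $k+1,\dots,n$ have mean $1$; $\mathcal{I}'=\{\nu_1',\dots,\nu_k'\}$. $f(k,m)=\frac{2}{16^{\alpha+1}}\cdot\frac{k-m+1}{k^{\frac{1}{\alpha+1}}}$. Condition (SR): for every $\nu\in\mathcal{I}$, $\mathbb{E}_\nu[R(T)]\le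 f(k,m)T^{\frac{1}{\alpha+1}}\varepsilon^{1-2\alpha}$, and for every $\nu'\in\mathcal{I}'$, $\mathbb{E}_{\nu'}[R(T)]\le\frac1{32}f(k,m)T^{\frac{1}{\alpha+1}}$. $L_1$ is the (random) number of rounds before the $(k+1)$-th arm of the stream is read ("stage one"). *)

theory Defs
  imports "HOL-Probability.Probability_Mass_Function"
begin

text \<open>Arms are numbered 1..n in stream order.
  An action in a round is (r', S', a): after this round arms 1..r' have been read
  from the stream, S' is the set of stored arms, and a is the pulled arm.
  A history entry additionally records the observed Bernoulli reward.\<close>

type_synonym action = "nat \<times> nat set \<times> nat"
type_synonym entry = "nat \<times> nat set \<times> nat \<times> bool"
type_synonym hist = "entry list"

definition hstate :: "hist \<Rightarrow> nat \<times> nat set" where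
  "hstate h = (if h = [] then (0, {}) else (fst (last h), fst (snd (last h))))"

text \<open>Legal actions from state (r, S): read further arms r+1..r' (r' \<le> n),
  discard arbitrary arms (read-but-not-stored arms are lost forever),
  keep at most m arms in memory, and pull a stored arm.\<close>
definition valid_actions :: "nat \<Rightarrow> nat \<Rightarrow> nat \<times> nat set \<Rightarrow> action set" where
  "valid_actions n m st = {(r', S', a). fst st \<le> r' \<and> r' \<le> n \<and>
      S' \<subseteq> snd st \<union> {fst st<..r'} \<and> card S' \<le> m \<and> a \<in> S'}"

definition entry_action :: "entry \<Rightarrow> action" where
  "entry_action e = (fst e, fst (snd e), fst (snd (snd e)))"

definition valid_hist :: "nat \<Rightarrow> nat \<Rightarrow> hist \<Rightarrow> bool" where
  "valid_hist n m h = (\<forall>j < length h. entry_action (h ! j) \<in> valid_actions n m (hstate (take j h)))"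

definition streaming_policy :: "nat \<Rightarrow> nat \<Rightarrow> (hist \<Rightarrow> action pmf) \<Rightarrow> bool" where
  "streaming_policy n m \<pi> = (\<forall>h. valid_hist n m h \<longrightarrow> set_pmf (\<pi> h) \<subseteq> valid_actions n m (hstate h))"

primrec run :: "(hist \<Rightarrow> action pmf) \<Rightarrow> (nat \<Rightarrow> real) \<Rightarrow> nat \<Rightarrow> hist pmf" where
  "run \<pi> \<mu> 0 = return_pmf []"
| "run \<pi> \<mu> (Suc t) = bind_pmf (run \<pi> \<mu> t) (\<lambda>h. bind_pmf (\<pi> h) (\<lambda>(r, S, a).
       bind_pmf (bernoulli_pmf (\<mu> a)) (\<lambda>x. return_pmf (h @ [(r, S, a, x)]))))"

definition best_mean :: "nat \<Rightarrow> (nat \<Rightarrow> real) \<Rightarrow> real" where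
  "best_mean n \<mu> = Max (\<mu> ` {1..n})"

definition exp_regret :: "nat \<Rightarrow> (hist \<Rightarrow> action pmf) \<Rightarrow> (nat \<Rightarrow> real) \<Rightarrow> nat \<Rightarrow> real" where
  "exp_regret n \<pi> \<mu> T = measure_pmf.expectation (run \<pi> \<mu> T)
      (\<lambda>h. \<Sum>e\<leftarrow>h. best_mean n \<mu> - \<mu> (fst (snd (snd e))))"

text \<open>L_1: number of rounds before the (k+1)-th arm is read, i.e. rounds in which
  at most k arms have been read at pulling time.\<close>
definition stage_one_len :: "nat \<Rightarrow> hist \<Rightarrow> nat" where
  "stage_one_len k h = length (filter (\<lambda>e. fst e \<le> k) h)"

definition exp_L1 :: "nat \<Rightarrow> (hist \<Rightarrow> action pmf) \<Rightarrow> (nat \<Rightarrow> real) \<Rightarrow> nat \<Rightarrow> real" where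
  "exp_L1 k \<pi> \<mu> T = measure_pmf.expectation (run \<pi> \<mu> T) (\<lambda>h. real (stage_one_len k h))"

definition eps_hard :: "real \<Rightarrow> nat \<Rightarrow> nat \<Rightarrow> real" where
  "eps_hard \<alpha> k T = 1/4 * (real k / real T) powr (1 / (2 + 2 * \<alpha>))"

definition nu_base :: "nat \<Rightarrow> nat \<Rightarrow> real \<Rightarrow> nat \<Rightarrow> real" where
  "nu_base n k \<epsilon> j = (if j = 1 then 1/2 + real n * \<epsilon>
      else if j \<le> k then 1/2 + (real n - 1) * \<epsilon> else 1/2)"

definition nu :: "nat \<Rightarrow> nat \<Rightarrow> real \<Rightarrow> nat \<Rightarrow> nat \<Rightarrow> real" where
  "nu n k \<epsilon> i = (if i = 1 then nu_base n k \<epsilon> else (nu_base n k \<epsilon>)(i := 1/2 + (real n + 1) * \<epsilon>))"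

definition nu' :: "nat \<Rightarrow> nat \<Rightarrow> real \<Rightarrow> nat \<Rightarrow> nat \<Rightarrow> real" where
  "nu' n k \<epsilon> i = (\<lambda>j. if k < j then 1 else nu n k \<epsilon> i j)"

definition f_km :: "real \<Rightarrow> nat \<Rightarrow> nat \<Rightarrow> real" where
  "f_km \<alpha> k m = 2 / 16 powr (\<alpha> + 1) * (real k - real m + 1) / real k powr (1 / (\<alpha> + 1))"

definition cond_SR :: "real \<Rightarrow> nat \<Rightarrow> nat \<Rightarrow> nat \<Rightarrow> (hist \<Rightarrow> action pmf) \<Rightarrow> nat \<Rightarrow> bool" where
  "cond_SR \<alpha> n k m \<pi> T = (let \<epsilon> = eps_hard \<alpha> k T in
     (\<forall>i\<in>{1..k}. exp_regret n \<pi> (nu n k \<epsilon> i) T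
         \<le> f_km \<alpha> k m * real T powr (1 / (\<alpha> + 1)) * \<epsilon> powr (1 - 2 * \<alpha>)) \<and>
     (\<forall>i\<in>{1..k}. exp_regret n \<pi> (nu' n k \<epsilon> i) T
         \<le> 1/32 * f_km \<alpha> k m * real T powr (1 / (\<alpha> + 1))))"

end

theory Submission
  imports Defs
begin

text \<open>Stage one only involves arms \<open>1, \<dots>, k\<close>, on which \<open>\<nu>\<^sub>i\<close> and \<open>\<nu>\<^sub>i'\<close> agree, so
  \<open>L\<^sub>1\<close> has the same expectation under both instances. Under \<open>\<nu>\<^sub>i'\<close> the best mean is \<open>1\<close>
  while every arm pulled during stage one has mean at most \<open>1/2 + (n+1)\<epsilon> \<le> 3/4\<close>, so each
  stage-one round costs regret at least \<open>1/4\<close>. Hence \<open>E[L\<^sub>1]/4\<close> is bounded by the regret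
  under \<open>\<nu>\<^sub>i'\<close>, which (SR) bounds by \<open>f(k,m) T^(1/(\<alpha>+1))/32\<close>.\<close>

lemma hstate_snoc [simp]: "hstate (h @ [e]) = (fst e, fst (snd e))"
  by (simp add: hstate_def)

lemma valid_hist_Nil [simp]: "valid_hist n m []"
  by (simp add: valid_hist_def)

lemma valid_hist_snoc:
  "valid_hist n m (h @ [e]) \<longleftrightarrow> valid_hist n m h \<and> entry_action e \<in> valid_actions n m (hstate h)"
  unfolding valid_hist_def by (auto simp: nth_append less_Suc_eq)

lemma valid_action_stored_le:
  assumes "snd st \<subseteq> {..fst st}" and "(r, S, a) \<in> valid_actions n m st"
  shows "S \<subseteq> {..r}" and "a \<le> r" and "fst st \<le> r"
proof -
  from assms(2) have r: "fst st \<le> r" and S: "S \<subseteq> snd st \<union> {fst st<..r}" and a: "a \<in> S"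
    by (auto simp: valid_actions_def)
  have "snd st \<union> {fst st<..r} \<subseteq> {..r}" using assms(1) r by auto
  with S show "S \<subseteq> {..r}" by (rule subset_trans)
  with a show "a \<le> r" by auto
  show "fst st \<le> r" by (fact r)
qed

lemma valid_hist_invariants:
  assumes "valid_hist n m h"
  shows "snd (hstate h) \<subseteq> {..fst (hstate h)} \<and> sorted (map fst h) \<and>
         (\<forall>e\<in>set h. fst e \<le> fst (hstate h) \<and> fst (snd (snd e)) \<le> fst e)"
  using assms
proof (induction h rule: rev_induct)
  case Nil
  then show ?case by (simp add: hstate_def)
next
  case (snoc e h)
  obtain r S a x where e: "e = (r, S, a, x)" by (cases e) auto
  from snoc.prems have "valid_hist n m h" and act: "(r, S, a) \<in> valid_actions n m (hstate h)"
    by (auto simp: valid_hist_snoc e entry_action_def)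
  with snoc.IH have IH: "snd (hstate h) \<subseteq> {..fst (hstate h)}" "sorted (map fst h)"
    "\<forall>e\<in>set h. fst e \<le> fst (hstate h) \<and> fst (snd (snd e)) \<le> fst e" by auto
  have "S \<subseteq> {..r}" "a \<le> r" "fst (hstate h) \<le> r"
    using valid_action_stored_le[OF IH(1) act] by auto
  with IH show ?case by (auto simp: e sorted_append)
qed

lemma valid_hist_run:
  assumes "streaming_policy n m \<pi>" and "h \<in> set_pmf (run \<pi> \<mu> t)"
  shows "valid_hist n m h \<and> length h = t"
  using assms(2)
proof (induction t arbitrary: h)
  case 0
  then show ?case by simp
next
  case (Suc t)
  then obtain h0 r S a x where h0: "h0 \<in> set_pmf (run \<pi> \<mu> t)"
    and act: "(r, S, a) \<in> set_pmf (\<pi> h0)" and h: "h = h0 @ [(r, S, a, x)]"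
    by (auto split: prod.splits)
  from Suc.IH[OF h0] have "valid_hist n m h0" "length h0 = t" by auto
  moreover from this assms(1) act have "(r, S, a) \<in> valid_actions n m (hstate h0)"
    by (auto simp: streaming_policy_def)
  ultimately show ?case by (simp add: h valid_hist_snoc entry_action_def)
qed

text \<open>The stage-one part of a history together with a flag telling whether stage one is
  still running. It evolves as a Markov chain with transition \<open>stage_one_step\<close>.\<close>

definition stage_one_view :: "nat \<Rightarrow> hist \<Rightarrow> hist \<times> bool" where
  "stage_one_view k h = (takeWhile (\<lambda>e. fst e \<le> k) h, list_all (\<lambda>e. fst e \<le> k) h)"

fun stage_one_step ::
    "nat \<Rightarrow> (hist \<Rightarrow> action pmf) \<Rightarrow> (nat \<Rightarrow> real) \<Rightarrow> hist \<times> bool \<Rightarrow> (hist \<times> bool) pmf" where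
  "stage_one_step k \<pi> \<mu> (p, True) =
     bind_pmf (\<pi> p) (\<lambda>(r, S, a). bind_pmf (bernoulli_pmf (\<mu> a)) (\<lambda>x. return_pmf
       (if r \<le> k then (p @ [(r, S, a, x)], True) else (p, False))))"
| "stage_one_step k \<pi> \<mu> (p, False) = return_pmf (p, False)"

lemma stage_one_view_snoc:
  "stage_one_view k (h @ [(r, S, a, x)]) =
     (if list_all (\<lambda>e. fst e \<le> k) h
      then if r \<le> k then (h @ [(r, S, a, x)], True) else (h, False)
      else stage_one_view k h)"
  by (auto simp: stage_one_view_def list_all_iff takeWhile_append)

lemma stage_one_view_running:
  "list_all (\<lambda>e. fst e \<le> k) h \<Longrightarrow> stage_one_view k h = (h, True)"
  by (simp add: stage_one_view_def takeWhile_eq_all_conv list_all_iff)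

lemma stage_one_view_stopped:
  "\<not> list_all (\<lambda>e. fst e \<le> k) h \<Longrightarrow> stage_one_view k h = (takeWhile (\<lambda>e. fst e \<le> k) h, False)"
  by (simp add: stage_one_view_def)

lemma map_stage_one_view_run_Suc:
  "map_pmf (stage_one_view k) (run \<pi> \<mu> (Suc t)) =
     bind_pmf (map_pmf (stage_one_view k) (run \<pi> \<mu> t)) (stage_one_step k \<pi> \<mu>)"
proof -
  have step: "map_pmf (stage_one_view k) (bind_pmf (\<pi> h) (\<lambda>(r, S, a).
      bind_pmf (bernoulli_pmf (\<mu> a)) (\<lambda>x. return_pmf (h @ [(r, S, a, x)]))))
    = stage_one_step k \<pi> \<mu> (stage_one_view k h)" for h
    by (cases "list_all (\<lambda>e. fst e \<le> k) h")
      (simp_all add: stage_one_view_running stage_one_view_stopped stage_one_view_snoc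
        map_bind_pmf split_def)
  have "map_pmf (stage_one_view k) (run \<pi> \<mu> (Suc t)) =
      bind_pmf (run \<pi> \<mu> t) (\<lambda>h. stage_one_step k \<pi> \<mu> (stage_one_view k h))"
    unfolding run.simps by (subst map_bind_pmf) (simp only: step)
  then show ?thesis by (simp add: bind_map_pmf)
qed

text \<open>Arms pulled while at most \<open>k\<close> arms have been read have index at most \<open>k\<close>,
  because a stored arm has always been read already.\<close>

lemma stage_one_step_cong:
  assumes agree: "\<And>j. j \<le> k \<Longrightarrow> \<mu> j = \<mu>' j"
    and pol: "streaming_policy n m \<pi>" and valid: "valid_hist n m p"
  shows "stage_one_step k \<pi> \<mu> (p, True) = stage_one_step k \<pi> \<mu>' (p, True)"
  unfolding stage_one_step.simps
proof (rule bind_pmf_cong[OF refl], clarify)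
  fix r S a assume "(r, S, a) \<in> set_pmf (\<pi> p)"
  with pol valid have "(r, S, a) \<in> valid_actions n m (hstate p)"
    by (auto simp: streaming_policy_def)
  with valid_hist_invariants[OF valid] have "a \<le> r"
    by (blast intro: valid_action_stored_le)
  with agree show "bind_pmf (bernoulli_pmf (\<mu> a)) (\<lambda>x. return_pmf
         (if r \<le> k then (p @ [(r, S, a, x)], True) else (p, False))) =
       bind_pmf (bernoulli_pmf (\<mu>' a)) (\<lambda>x. return_pmf
         (if r \<le> k then (p @ [(r, S, a, x)], True) else (p, False)))"
    by (cases "r \<le> k") auto
qed

lemma map_stage_one_view_run_cong:
  assumes agree: "\<And>j. j \<le> k \<Longrightarrow> \<mu> j = \<mu>' j" and pol: "streaming_policy n m \<pi>"
  shows "map_pmf (stage_one_view k) (run \<pi> \<mu> t) = map_pmf (stage_one_view k) (run \<pi> \<mu>' t)"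
proof (induction t)
  case 0
  then show ?case by simp
next
  case (Suc t)
  show ?case unfolding map_stage_one_view_run_Suc
  proof (rule bind_pmf_cong[OF Suc])
    fix v assume "v \<in> set_pmf (map_pmf (stage_one_view k) (run \<pi> \<mu>' t))"
    then obtain h where h: "h \<in> set_pmf (run \<pi> \<mu>' t)" and v: "v = stage_one_view k h"
      by auto
    show "stage_one_step k \<pi> \<mu> v = stage_one_step k \<pi> \<mu>' v"
    proof (cases "list_all (\<lambda>e. fst e \<le> k) h")
      case True
      then have "v = (h, True)" by (simp add: v stage_one_view_running)
      moreover from pol h have "valid_hist n m h" by (simp add: valid_hist_run)
      ultimately show ?thesis
        using stage_one_step_cong[OF agree pol] by simp
    next
      case False
      then show ?thesis
        by (simp add: v stage_one_view_stopped)
    qed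
  qed
qed

lemma filter_eq_takeWhile_if_sorted:
  "sorted (map f xs) \<Longrightarrow> filter (\<lambda>x. f x \<le> c) xs = takeWhile (\<lambda>x. f x \<le> c) xs"
  for f :: "'a \<Rightarrow> 'b::linorder"
proof (induction xs)
  case (Cons x xs)
  show ?case
  proof (cases "f x \<le> c")
    case False
    with Cons.prems have "\<forall>y\<in>set xs. \<not> f y \<le> c"
      by (auto dest: order_trans)
    then have "filter (\<lambda>x. f x \<le> c) xs = []"
      by (simp add: filter_empty_conv)
    with False show ?thesis by simp
  qed (use Cons in simp)
qed simp

lemma exp_L1_eq_stage_one_view:
  assumes "streaming_policy n m \<pi>"
  shows "exp_L1 k \<pi> \<mu> T = measure_pmf.expectation
           (map_pmf (stage_one_view k) (run \<pi> \<mu> T)) (\<lambda>v. real (length (fst v)))"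
  unfolding exp_L1_def integral_map_pmf
proof (rule integral_cong_AE)
  show "AE h in run \<pi> \<mu> T. real (stage_one_len k h) = real (length (fst (stage_one_view k h)))"
  proof (rule AE_pmfI)
    fix h assume "h \<in> set_pmf (run \<pi> \<mu> T)"
    with assms have "valid_hist n m h" by (simp add: valid_hist_run)
    then have "sorted (map fst h)" by (simp add: valid_hist_invariants)
    then show "real (stage_one_len k h) = real (length (fst (stage_one_view k h)))"
      by (simp add: stage_one_len_def stage_one_view_def filter_eq_takeWhile_if_sorted)
  qed
qed simp_all

lemma exp_L1_cong:
  assumes "\<And>j. j \<le> k \<Longrightarrow> \<mu> j = \<mu>' j" and "streaming_policy n m \<pi>"
  shows "exp_L1 k \<pi> \<mu> T = exp_L1 k \<pi> \<mu>' T"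
  using map_stage_one_view_run_cong[OF assms] by (simp add: exp_L1_eq_stage_one_view[OF assms(2)])

lemma sum_list_ge_count_filter:
  fixes g :: "'a \<Rightarrow> real"
  assumes "\<forall>x\<in>set xs. 0 \<le> g x" and "\<forall>x\<in>set xs. P x \<longrightarrow> c \<le> g x"
  shows "c * real (length (filter P xs)) \<le> (\<Sum>x\<leftarrow>xs. g x)"
  using assms by (induction xs) (auto simp: algebra_simps)

lemma exp_regret_ge_exp_L1:
  assumes pol: "streaming_policy n m \<pi>"
    and gap_nonneg: "\<And>j. 0 \<le> best_mean n \<mu> - \<mu> j"
    and gap_bounded: "\<And>j. best_mean n \<mu> - \<mu> j \<le> B"
    and stage_one_gap: "\<And>j. j \<le> k \<Longrightarrow> c \<le> best_mean n \<mu> - \<mu> j"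
  shows "c * exp_L1 k \<pi> \<mu> T \<le> exp_regret n \<pi> \<mu> T"
proof -
  define regret :: "hist \<Rightarrow> real" where
    "regret h = (\<Sum>e\<leftarrow>h. best_mean n \<mu> - \<mu> (fst (snd (snd e))))" for h
  have regret_nonneg: "0 \<le> regret h" for h
    unfolding regret_def using gap_nonneg by (auto intro!: sum_list_nonneg)
  have "c * exp_L1 k \<pi> \<mu> T = measure_pmf.expectation (run \<pi> \<mu> T) (\<lambda>h. c * stage_one_len k h)"
    by (simp add: exp_L1_def)
  also have "\<dots> \<le> measure_pmf.expectation (run \<pi> \<mu> T) regret"
  proof (rule integral_mono_AE')
    show "integrable (measure_pmf (run \<pi> \<mu> T)) regret"
    proof (rule measure_pmf.integrable_const_bound[where B = "real T * B"])
      show "AE h in measure_pmf (run \<pi> \<mu> T). norm (regret h) \<le> real T * B"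
      proof (rule AE_pmfI)
        fix h assume "h \<in> set_pmf (run \<pi> \<mu> T)"
        with pol have "length h = T" using valid_hist_run by blast
        with gap_bounded sum_list_mono[of h _ "\<lambda>_. B"] show "norm (regret h) \<le> real T * B"
          by (simp add: regret_def regret_nonneg[unfolded regret_def] sum_list_triv)
      qed
    qed simp
    show "AE h in measure_pmf (run \<pi> \<mu> T). 0 \<le> regret h"
      by (simp add: regret_nonneg)
    show "AE h in measure_pmf (run \<pi> \<mu> T). c * stage_one_len k h \<le> regret h"
    proof (rule AE_pmfI)
      fix h assume "h \<in> set_pmf (run \<pi> \<mu> T)"
      with pol have "\<forall>e\<in>set h. fst (snd (snd e)) \<le> fst e"
        using valid_hist_run valid_hist_invariants by blast
      with stage_one_gap gap_nonneg show "c * stage_one_len k h \<le> regret h"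
        unfolding regret_def stage_one_len_def
        by (intro sum_list_ge_count_filter) (auto dest: order_trans)
    qed
  qed
  also have "\<dots> = exp_regret n \<pi> \<mu> T"
    by (simp add: exp_regret_def regret_def[abs_def])
  finally show ?thesis .
qed

context
  fixes n k :: nat and \<epsilon> :: real
  assumes eps_nonneg: "0 \<le> \<epsilon>" and eps_small: "(real n + 1) * \<epsilon> \<le> 1/4" and k_less: "k < n"
begin

lemma nu'_nonneg: "0 \<le> nu' n k \<epsilon> i j"
  using eps_nonneg k_less by (simp add: nu'_def nu_def nu_base_def)

lemma nu'_stage_one_le: "j \<le> k \<Longrightarrow> nu' n k \<epsilon> i j \<le> 1/2 + (real n + 1) * \<epsilon>"
  using eps_nonneg by (auto simp: nu'_def nu_def nu_base_def algebra_simps)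

lemma nu'_le_one: "nu' n k \<epsilon> i j \<le> 1"
  using nu'_stage_one_le[of j i] eps_small by (auto simp: nu'_def)

lemma best_mean_nu': "best_mean n (nu' n k \<epsilon> i) = 1"
  unfolding best_mean_def
proof (rule Max_eqI)
  show "1 \<in> nu' n k \<epsilon> i ` {1..n}"
    using k_less by (auto simp: nu'_def intro!: image_eqI[of _ _ n])
qed (auto intro: nu'_le_one)

end

lemma eps_hard_bounds:
  assumes "\<alpha> \<ge> 1" and "1 \<le> k" and "real k * (real n + 1) powr (2 + 2 * \<alpha>) \<le> real T"
  shows "0 \<le> eps_hard \<alpha> k T" and "(real n + 1) * eps_hard \<alpha> k T \<le> 1/4"
proof -
  define q where "q = 2 + 2 * \<alpha>"
  have q: "q > 0" using assms(1) by (simp add: q_def)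
  have k: "real k > 0" using assms(2) by simp
  have "0 < real k * (real n + 1) powr q" using k by simp
  with assms(3) have T: "real T > 0" by (simp add: q_def)
  show "0 \<le> eps_hard \<alpha> k T" by (simp add: eps_hard_def)
  have "real k / real T \<le> real k / (real k * (real n + 1) powr q)"
    using assms(3) k T unfolding q_def[symmetric] by (intro divide_left_mono) auto
  also have "\<dots> = (real n + 1) powr (- q)"
    using k by (simp add: powr_minus_divide)
  finally have "(real k / real T) powr (1 / q) \<le> ((real n + 1) powr (- q)) powr (1 / q)"
    using q by (intro powr_mono2) auto
  also have "\<dots> = (real n + 1) powr (- 1)"
    using q by (simp add: powr_powr)
  also have "\<dots> = 1 / (real n + 1)"
    by (simp add: powr_minus_divide)
  finally have "(real n + 1) * (real k / real T) powr (1 / q) \<le> 1"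
    by (simp add: field_simps)
  then show "(real n + 1) * eps_hard \<alpha> k T \<le> 1/4"
    by (simp add: eps_hard_def q_def)
qed

theorem lemma4p5:
  fixes \<alpha> :: real and n k m :: nat
  assumes "\<alpha> \<ge> 1" and "2 \<le> m" and "m \<le> k" and "k < n"
  shows "\<exists>T0. \<forall>T \<ge> T0. \<forall>\<pi>. streaming_policy n m \<pi> \<longrightarrow> cond_SR \<alpha> n k m \<pi> T \<longrightarrow>
           (\<forall>i\<in>{1..k}. exp_L1 k \<pi> (nu n k (eps_hard \<alpha> k T) i) T
              \<le> 1/8 * f_km \<alpha> k m * real T powr (1 / (\<alpha> + 1)))"
proof (intro exI allI impI ballI)
  fix T \<pi> i
  assume "nat \<lceil>real k * (real n + 1) powr (2 + 2 * \<alpha>)\<rceil> \<le> T"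
    and pol: "streaming_policy n m \<pi>" and sr: "cond_SR \<alpha> n k m \<pi> T" and i: "i \<in> {1..k}"
  then have "real k * (real n + 1) powr (2 + 2 * \<alpha>) \<le> real T" by linarith
  with assms have eps: "0 \<le> eps_hard \<alpha> k T" "(real n + 1) * eps_hard \<alpha> k T \<le> 1/4"
    using eps_hard_bounds by auto
  let ?\<nu> = "nu n k (eps_hard \<alpha> k T) i" and ?\<nu>' = "nu' n k (eps_hard \<alpha> k T) i"
  have same_L1: "exp_L1 k \<pi> ?\<nu> T = exp_L1 k \<pi> ?\<nu>' T"
    using pol by (intro exp_L1_cong) (simp_all add: nu'_def)
  have stage_one_gap: "1/4 \<le> 1 - ?\<nu>' j" if "j \<le> k" for j
    using nu'_stage_one_le[OF eps assms(4) that, of i] eps(2) by linarith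
  have "1/4 * exp_L1 k \<pi> ?\<nu>' T \<le> exp_regret n \<pi> ?\<nu>' T"
    using eps assms(4) stage_one_gap
    by (intro exp_regret_ge_exp_L1[OF pol, where B = 1])
      (simp_all add: best_mean_nu' nu'_nonneg nu'_le_one)
  also have "\<dots> \<le> 1/32 * f_km \<alpha> k m * real T powr (1 / (\<alpha> + 1))"
    using sr i by (simp add: cond_SR_def Let_def)
  finally show "exp_L1 k \<pi> ?\<nu> T \<le> 1/8 * f_km \<alpha> k m * real T powr (1 / (\<alpha> + 1))"
    using same_L1 by simp
qed

end
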